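(* For every $n\ge0$ there exists a bijection between the set of relaxed binary trees of size $n$ and the set $\mathcal{D}_n$ of horizontally decorated Dyck paths of length $2n$.
   Context: A (rooted, plane) binary tree is either a leaf or an internal node with an ordered pair of binary subtrees; its size is its number of internal nodes; postorder visits left subtree, right subtree, then root. A relaxed binary tree of size $n$ is obtained from a binary tree $T$ with $n$ internal nodes (its spine) by keeping the left-most leaf and turning every other leaf $\ell$ into a pointer to a vertex of $T$ which is an internal node or the left-most leaf and which precedes $\ell$ in postorder; two relaxed trees are equal iff they have the same spine and the same pointer targets. A horizontally decorated path is a lattice path starting at $(0,0)$ with steps $H=(1,0)$ and $V=(0,1)$ confined to the region $0\le y\le x$, in which each $H$ step is decorated by a number in $\{1,\dots,k+1\}$, where $k$ is the $y$-coordinate of that step. It is a horizontally decorated Dyck path (of length $2n$) if it ends at $(n,n)$; $\mathcal{D}_n$ denotes the set of these. *)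

theory Defs
  imports Main
begin

datatype bt = Leaf | Node bt bt

fun isize :: "bt \<Rightarrow> nat" where
  "isize Leaf = 0"
| "isize (Node l r) = Suc (isize l + isize r)"

text \<open>Vertices are addressed by their path from the root (False = left child, True = right child).\<close>
fun leaves :: "bt \<Rightarrow> bool list set" where
  "leaves Leaf = {[]}"
| "leaves (Node l r) = Cons False ` leaves l \<union> Cons True ` leaves r"

fun internals :: "bt \<Rightarrow> bool list set" where
  "internals Leaf = {}"
| "internals (Node l r) = insert [] (Cons False ` internals l \<union> Cons True ` internals r)"

fun lml :: "bt \<Rightarrow> bool list" where
  "lml Leaf = []"
| "lml (Node l r) = False # lml l"

fun post :: "bt \<Rightarrow> bool list list" where
  "post Leaf = [[]]"
| "post (Node l r) = map (Cons False) (post l) @ map (Cons True) (post r) @ [[]]"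

definition precedes :: "bt \<Rightarrow> bool list \<Rightarrow> bool list \<Rightarrow> bool" where
  "precedes T u v \<longleftrightarrow> (\<exists>i j. i < j \<and> j < length (post T) \<and> post T ! i = u \<and> post T ! j = v)"

text \<open>The pointer map sends each
  non-left-most leaf to its target vertex; it is fixed to [] outside this domain
  so that two relaxed trees are equal iff same spine and same pointer targets.\<close>
definition relaxed_trees :: "nat \<Rightarrow> (bt \<times> (bool list \<Rightarrow> bool list)) set" where
  "relaxed_trees n = {(T, f). isize T = n \<and>
     (\<forall>lf \<in> leaves T - {lml T}. (f lf \<in> internals T \<or> f lf = lml T) \<and> precedes T (f lf) lf) \<and>
     (\<forall>x. x \<notin> leaves T - {lml T} \<longrightarrow> f x = [])}"

datatype step = H nat | V

fun valid_from :: "nat \<Rightarrow> nat \<Rightarrow> step list \<Rightarrow> bool" where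
  "valid_from x y [] = True"
| "valid_from x y (H d # p) = (1 \<le> d \<and> d \<le> y + 1 \<and> valid_from (Suc x) y p)"
| "valid_from x y (V # p) = (Suc y \<le> x \<and> valid_from x (Suc y) p)"

fun endpoint :: "step list \<Rightarrow> nat \<times> nat" where
  "endpoint [] = (0, 0)"
| "endpoint (H d # p) = (case endpoint p of (x, y) \<Rightarrow> (Suc x, y))"
| "endpoint (V # p) = (case endpoint p of (x, y) \<Rightarrow> (x, Suc y))"

definition dyck_paths :: "nat \<Rightarrow> step list set" where
  "dyck_paths n = {p. valid_from 0 0 p \<and> endpoint p = (n, n)}"

end

(*
  Label every leaf of a binary tree by a positive integer and read the tree in postorder,
  writing H d for a leaf labelled d and V for an internal node. A leaf preceded by k internal
  nodes is read at height k, and a relaxed tree allows it exactly k + 1 pointer targets: the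
  left-most leaf and those k internal nodes. So relaxed trees correspond to labellings whose
  postorder word is horizontally decorated; that word starts with H 1 (the left-most leaf), and
  deleting this letter leaves a path to (n, n). Conversely a shift-reduce parser rebuilds the
  labelled tree from the path, and it never runs short of subtrees because the path stays in
  the region y <= x.
*)
theory Submission
  imports Defs
begin

datatype ltree = LLeaf nat | LNode ltree ltree

fun shape :: "ltree \<Rightarrow> bt" where
  "shape (LLeaf d) = Leaf"
| "shape (LNode l r) = Node (shape l) (shape r)"

fun postorder_word :: "ltree \<Rightarrow> step list" where
  "postorder_word (LLeaf d) = [H d]"
| "postorder_word (LNode l r) = postorder_word l @ postorder_word r @ [V]"

fun decorations_ok :: "nat \<Rightarrow> step list \<Rightarrow> bool" where
  "decorations_ok y [] = True"
| "decorations_ok y (H d # p) = (d \<in> {1..y + 1} \<and> decorations_ok y p)"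
| "decorations_ok y (V # p) = decorations_ok (Suc y) p"

definition decorated_trees :: "nat \<Rightarrow> ltree set" where
  "decorated_trees n = {t. isize (shape t) = n \<and> decorations_ok 0 (postorder_word t)}"

fun num_H :: "step list \<Rightarrow> nat" where
  "num_H [] = 0"
| "num_H (H d # p) = Suc (num_H p)"
| "num_H (V # p) = num_H p"

fun num_V :: "step list \<Rightarrow> nat" where
  "num_V [] = 0"
| "num_V (H d # p) = num_V p"
| "num_V (V # p) = Suc (num_V p)"

lemma num_H_append [simp]: "num_H (p @ q) = num_H p + num_H q"
  by (induction p rule: num_H.induct) auto

lemma num_V_append [simp]: "num_V (p @ q) = num_V p + num_V q"
  by (induction p rule: num_V.induct) auto

lemma endpoint_eq_counts: "endpoint p = (num_H p, num_V p)"
  by (induction p rule: num_H.induct) auto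

lemma num_H_postorder_word [simp]: "num_H (postorder_word t) = Suc (isize (shape t))"
  by (induction t) auto

lemma num_V_postorder_word [simp]: "num_V (postorder_word t) = isize (shape t)"
  by (induction t) auto

lemma postorder_word_starts_with_H: "\<exists>d q. postorder_word t = H d # q"
  by (induction t) auto

lemma decorated_postorder_word_first:
  assumes "decorations_ok 0 (postorder_word t)"
  obtains q where "postorder_word t = H 1 # q" and "decorations_ok 0 q"
  using assms postorder_word_starts_with_H[of t] by auto

fun parse :: "ltree list \<Rightarrow> step list \<Rightarrow> ltree list option" where
  "parse s [] = Some s"
| "parse s (H d # p) = parse (LLeaf d # s) p"
| "parse (r # l # s) (V # p) = parse (LNode l r # s) p"
| "parse _ (V # p) = None"

lemma parse_postorder_word: "parse s (postorder_word t @ p) = parse (t # s) p"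
  by (induction t arbitrary: s p) auto

lemma inj_postorder_word: "inj postorder_word"
proof (rule injI)
  fix t u assume "postorder_word t = postorder_word u"
  then have "parse [] (postorder_word t @ []) = parse [] (postorder_word u @ [])" by simp
  then show "t = u" by (simp only: parse_postorder_word) simp
qed

lemma parse_eq_singleton:
  "parse s p = Some [t] \<Longrightarrow> concat (map postorder_word (rev s)) @ p = postorder_word t"
  by (induction s p rule: parse.induct) auto

lemma length_parse:
  "parse s p = Some s' \<Longrightarrow> length s' + num_V p = length s + num_H p"
  by (induction s p rule: parse.induct) auto

text \<open>At the point (x, y) the parser stack holds x - y + 1 trees, so a V step leaves the
  region y \<le> x exactly when it would pop from a stack with fewer than two trees.\<close>

lemma valid_from_iff_parse:
  "y \<le> x \<Longrightarrow> length s = Suc (x - y) \<Longrightarrow>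
    valid_from x y p \<longleftrightarrow> decorations_ok y p \<and> parse s p \<noteq> None"
proof (induction s p arbitrary: x y rule: parse.induct)
  case (3 r l s p)
  then show ?case by (auto simp: Suc_le_eq)
qed auto

lemma postorder_word_in_dyck_paths:
  assumes "t \<in> decorated_trees n"
  shows "tl (postorder_word t) \<in> dyck_paths n"
proof -
  from assms obtain q where q: "postorder_word t = H 1 # q" "decorations_ok 0 q"
    and n: "isize (shape t) = n"
    unfolding decorated_trees_def by (auto elim: decorated_postorder_word_first)
  have "parse [LLeaf 1] q = parse [] (postorder_word t @ [])"
    using q(1) by simp
  also have "\<dots> = Some [t]"
    by (simp only: parse_postorder_word) simp
  finally have "valid_from 0 0 q"
    using valid_from_iff_parse[of 0 0 "[LLeaf 1]"] q(2) by simp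
  moreover have "endpoint q = (n, n)"
    using q(1) num_H_postorder_word[of t] num_V_postorder_word[of t] n
    by (simp add: endpoint_eq_counts)
  ultimately show ?thesis
    using q(1) by (simp add: dyck_paths_def)
qed

lemma dyck_path_parses:
  assumes "p \<in> dyck_paths n"
  obtains t where "t \<in> decorated_trees n" and "postorder_word t = H 1 # p"
proof -
  from assms have valid: "valid_from 0 0 p" and counts: "num_H p = n" "num_V p = n"
    by (auto simp: dyck_paths_def endpoint_eq_counts)
  then have dec: "decorations_ok 0 p" and "parse [LLeaf 1] p \<noteq> None"
    using valid_from_iff_parse[of 0 0 "[LLeaf 1]" p] by auto
  then obtain s where s: "parse [LLeaf 1] p = Some s" by blast
  then have "length s = 1"
    using length_parse[OF s] counts by simp
  then obtain t where "s = [t]"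
    by (auto simp: length_Suc_conv)
  then have word: "postorder_word t = H 1 # p"
    using parse_eq_singleton[of "[LLeaf 1]" p t] s by simp
  moreover have "t \<in> decorated_trees n"
    using word num_V_postorder_word[of t] counts dec by (simp add: decorated_trees_def)
  ultimately show thesis by (intro that)
qed

lemma bij_decorated_trees_dyck_paths:
  "bij_betw (\<lambda>t. tl (postorder_word t)) (decorated_trees n) (dyck_paths n)"
proof (rule bij_betw_imageI)
  show "inj_on (\<lambda>t. tl (postorder_word t)) (decorated_trees n)"
  proof (rule inj_onI)
    fix t u assume "t \<in> decorated_trees n" "u \<in> decorated_trees n"
      and "tl (postorder_word t) = tl (postorder_word u)"
    then have "postorder_word t = postorder_word u"
      unfolding decorated_trees_def by (auto elim!: decorated_postorder_word_first)
    then show "t = u"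
      using inj_postorder_word by (simp add: inj_eq)
  qed
  show "(\<lambda>t. tl (postorder_word t)) ` decorated_trees n = dyck_paths n"
  proof (intro equalityI subsetI)
    fix p assume "p \<in> dyck_paths n"
    then obtain t where "t \<in> decorated_trees n" "postorder_word t = H 1 # p"
      by (rule dyck_path_parses)
    then show "p \<in> (\<lambda>t. tl (postorder_word t)) ` decorated_trees n"
      by (metis image_eqI list.sel(3))
  qed (auto intro: postorder_word_in_dyck_paths)
qed

fun leaf_label :: "ltree \<Rightarrow> bool list \<Rightarrow> nat" where
  "leaf_label (LLeaf d) a = d"
| "leaf_label (LNode l r) [] = 0"
| "leaf_label (LNode l r) (False # a) = leaf_label l a"
| "leaf_label (LNode l r) (True # a) = leaf_label r a"

fun label_tree :: "bt \<Rightarrow> (bool list \<Rightarrow> nat) \<Rightarrow> ltree" where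
  "label_tree Leaf g = LLeaf (g [])"
| "label_tree (Node l r) g = LNode (label_tree l (g \<circ> Cons False)) (label_tree r (g \<circ> Cons True))"

lemma shape_label_tree [simp]: "shape (label_tree T g) = T"
  by (induction T arbitrary: g) auto

lemma label_tree_shape: "label_tree (shape t) (leaf_label t) = t"
proof (induction t)
  case (LNode l r)
  have "leaf_label (LNode l r) \<circ> Cons False = leaf_label l"
    and "leaf_label (LNode l r) \<circ> Cons True = leaf_label r" by auto
  with LNode show ?case by simp
qed simp

lemma leaf_label_label_tree: "a \<in> leaves T \<Longrightarrow> leaf_label (label_tree T g) a = g a"
proof (induction T arbitrary: g a)
  case (Node l r)
  then show ?case by (auto simp: comp_def)
qed simp

lemma label_tree_cong: "(\<And>a. a \<in> leaves T \<Longrightarrow> g a = h a) \<Longrightarrow> label_tree T g = label_tree T h"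
proof (induction T arbitrary: g h)
  case (Node l r)
  have "label_tree l (g \<circ> Cons False) = label_tree l (h \<circ> Cons False)"
    and "label_tree r (g \<circ> Cons True) = label_tree r (h \<circ> Cons True)"
    by (intro Node.IH; simp add: Node.prems)+
  then show ?case by simp
qed simp

lemma postorder_word_label_tree:
  "postorder_word (label_tree T g) = map (\<lambda>a. if a \<in> leaves T then H (g a) else V) (post T)"
  by (induction T arbitrary: g) auto

lemma set_post: "set (post T) = leaves T \<union> internals T"
  by (induction T) auto

lemma leaves_Int_internals: "leaves T \<inter> internals T = {}"
  by (induction T) auto

lemma distinct_post: "distinct (post T)"
  by (induction T) (auto simp: distinct_map)

lemma post_starts_with_lml: "\<exists>vs. post T = lml T # vs"
  by (induction T) auto

lemma lml_in_leaves: "lml T \<in> leaves T"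
  by (induction T) auto

lemma in_set_takeWhile_neq_iff:
  assumes "distinct xs" and "v \<in> set xs"
  shows "u \<in> set (takeWhile (\<lambda>w. w \<noteq> v) xs) \<longleftrightarrow>
    (\<exists>i j. i < j \<and> j < length xs \<and> xs ! i = u \<and> xs ! j = v)"
proof -
  obtain ys zs where xs: "xs = ys @ v # zs"
    using assms(2) by (meson split_list)
  with assms(1) have "v \<notin> set ys" by simp
  then have prefix: "takeWhile (\<lambda>w. w \<noteq> v) xs = ys"
    unfolding xs by (induction ys) auto
  have position_v: "j < length xs \<and> xs ! j = v \<longleftrightarrow> j = length ys" for j
    using nth_eq_iff_index_eq[OF assms(1), of j "length ys"] by (auto simp: xs)
  have "(\<exists>i j. i < j \<and> j < length xs \<and> xs ! i = u \<and> xs ! j = v) \<longleftrightarrow>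
      (\<exists>i < length ys. xs ! i = u)"
  proof
    assume "\<exists>i j. i < j \<and> j < length xs \<and> xs ! i = u \<and> xs ! j = v"
    then obtain i j where "i < j" "j < length xs" "xs ! i = u" "xs ! j = v"
      by blast
    then show "\<exists>i < length ys. xs ! i = u"
      using position_v[of j] by auto
  next
    assume "\<exists>i < length ys. xs ! i = u"
    then show "\<exists>i j. i < j \<and> j < length xs \<and> xs ! i = u \<and> xs ! j = v"
      using position_v[of "length ys"] by auto
  qed
  then show ?thesis
    unfolding prefix by (auto simp: in_set_conv_nth xs nth_append)
qed

lemma bij_betw_nth_pred:
  assumes "distinct xs"
  shows "bij_betw (\<lambda>d. xs ! (d - 1)) {1..length xs} (set xs)"
proof -
  have "bij_betw (\<lambda>d. d - 1) {1..length xs} {..<length xs}"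
    by (rule bij_betw_byWitness[where f' = Suc]) auto
  from bij_betw_trans[OF this bij_betw_nth[OF assms refl refl]] show ?thesis
    by (simp add: comp_def)
qed

lemma precedes_iff_takeWhile:
  "v \<in> set (post T) \<Longrightarrow> precedes T u v \<longleftrightarrow> u \<in> set (takeWhile (\<lambda>w. w \<noteq> v) (post T))"
  by (simp add: precedes_def in_set_takeWhile_neq_iff distinct_post)

lemma decorations_ok_map:
  "distinct xs \<Longrightarrow> decorations_ok y (map (\<lambda>a. if P a then H (g a) else V) xs) \<longleftrightarrow>
    (\<forall>a \<in> set xs. P a \<longrightarrow> g a \<in> {1..y + 1 + length (filter (\<lambda>b. \<not> P b) (takeWhile (\<lambda>b. b \<noteq> a) xs))})"
proof (induction xs arbitrary: y)
  case (Cons x xs)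
  then have "distinct xs" and "\<forall>a \<in> set xs. takeWhile (\<lambda>b. b \<noteq> a) (x # xs) = x # takeWhile (\<lambda>b. b \<noteq> a) xs"
    by auto
  with Cons.IH show ?case by (cases "P x") simp_all
qed simp

definition targets_before :: "bt \<Rightarrow> bool list \<Rightarrow> bool list list" where
  "targets_before T v = filter (\<lambda>u. u \<in> internals T \<or> u = lml T) (takeWhile (\<lambda>w. w \<noteq> v) (post T))"

definition nth_target :: "bt \<Rightarrow> bool list \<Rightarrow> nat \<Rightarrow> bool list" where
  "nth_target T v d = targets_before T v ! (d - 1)"

lemma set_targets_before:
  "v \<in> set (post T) \<Longrightarrow>
    set (targets_before T v) = {u. (u \<in> internals T \<or> u = lml T) \<and> precedes T u v}"
  by (auto simp: targets_before_def precedes_iff_takeWhile)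

lemma distinct_targets_before: "distinct (targets_before T v)"
  by (simp add: targets_before_def distinct_post)

definition internals_before :: "bt \<Rightarrow> bool list \<Rightarrow> nat" where
  "internals_before T v = length (filter (\<lambda>u. u \<in> internals T) (takeWhile (\<lambda>w. w \<noteq> v) (post T)))"

lemma internals_before_lml: "internals_before T (lml T) = 0"
  using post_starts_with_lml[of T] by (auto simp: internals_before_def)

lemma length_targets_before:
  assumes "v \<in> leaves T" and "v \<noteq> lml T"
  shows "length (targets_before T v) = Suc (internals_before T v)"
proof -
  obtain vs where post: "post T = lml T # vs"
    using post_starts_with_lml by blast
  define before where "before = takeWhile (\<lambda>w. w \<noteq> v) vs"
  have "set before \<subseteq> set vs"
    unfolding before_def by (auto dest: set_takeWhileD)
  moreover have "lml T \<notin> set vs"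
    using distinct_post[of T] post by auto
  ultimately have "filter (\<lambda>u. u \<in> internals T \<or> u = lml T) before = filter (\<lambda>u. u \<in> internals T) before"
    by (intro filter_cong) auto
  then show ?thesis
    using assms lml_in_leaves[of T] leaves_Int_internals[of T]
    unfolding targets_before_def internals_before_def post before_def by auto
qed

lemma decorations_ok_label_tree_iff:
  "decorations_ok 0 (postorder_word (label_tree T g)) \<longleftrightarrow>
    g (lml T) = 1 \<and> (\<forall>v \<in> leaves T - {lml T}. g v \<in> {1..length (targets_before T v)})"
proof -
  have "filter (\<lambda>u. u \<notin> leaves T) (takeWhile (\<lambda>w. w \<noteq> v) (post T)) =
      filter (\<lambda>u. u \<in> internals T) (takeWhile (\<lambda>w. w \<noteq> v) (post T))" for v
    using set_post[of T] leaves_Int_internals[of T] by (intro filter_cong) (auto dest: set_takeWhileD)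
  then have "decorations_ok 0 (postorder_word (label_tree T g)) \<longleftrightarrow>
      (\<forall>v \<in> leaves T. g v \<in> {1..Suc (internals_before T v)})"
    using set_post[of T]
    by (auto simp: postorder_word_label_tree decorations_ok_map[OF distinct_post] internals_before_def)
  also have "\<dots> \<longleftrightarrow> g (lml T) \<in> {1..Suc (internals_before T (lml T))} \<and>
      (\<forall>v \<in> leaves T - {lml T}. g v \<in> {1..Suc (internals_before T v)})"
    using lml_in_leaves[of T] by blast
  finally show ?thesis
    by (auto simp: internals_before_lml length_targets_before)
qed

lemma bij_betw_nth_target:
  "v \<in> leaves T \<Longrightarrow> bij_betw (nth_target T v) {1..length (targets_before T v)}
    {u. (u \<in> internals T \<or> u = lml T) \<and> precedes T u v}"
proof -
  assume "v \<in> leaves T"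
  then have "v \<in> set (post T)"
    by (simp add: set_post)
  then show ?thesis
    using bij_betw_nth_pred[OF distinct_targets_before, of T v]
    by (simp add: nth_target_def[abs_def] set_targets_before)
qed

definition pointers :: "bt \<Rightarrow> (bool list \<Rightarrow> nat) \<Rightarrow> bool list \<Rightarrow> bool list" where
  "pointers T g v = (if v \<in> leaves T - {lml T} then nth_target T v (g v) else [])"

definition relax :: "ltree \<Rightarrow> bt \<times> (bool list \<Rightarrow> bool list)" where
  "relax t = (shape t, pointers (shape t) (leaf_label t))"

lemma decorated_treesE:
  assumes "t \<in> decorated_trees n"
  obtains T g where "t = label_tree T g" and "relax t = (T, pointers T g)" and "isize T = n"
    and "g (lml T) = 1" and "\<And>v. v \<in> leaves T - {lml T} \<Longrightarrow> g v \<in> {1..length (targets_before T v)}"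
proof
  show "t = label_tree (shape t) (leaf_label t)"
    by (simp add: label_tree_shape)
  from assms show "isize (shape t) = n" and "leaf_label t (lml (shape t)) = 1"
    and "\<And>v. v \<in> leaves (shape t) - {lml (shape t)} \<Longrightarrow>
      leaf_label t v \<in> {1..length (targets_before (shape t) v)}"
    using decorations_ok_label_tree_iff[of "shape t" "leaf_label t", unfolded label_tree_shape]
    by (auto simp: decorated_trees_def simp del: atLeastAtMost_iff)
qed (simp add: relax_def)

lemma inj_on_relax: "inj_on relax (decorated_trees n)"
proof (rule inj_onI)
  fix t u assume "t \<in> decorated_trees n" "u \<in> decorated_trees n" and eq: "relax t = relax u"
  obtain T g where t: "t = label_tree T g" "relax t = (T, pointers T g)" "g (lml T) = 1"
      "\<And>v. v \<in> leaves T - {lml T} \<Longrightarrow> g v \<in> {1..length (targets_before T v)}"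
    using \<open>t \<in> decorated_trees n\<close> by (elim decorated_treesE) blast
  obtain T' h where u: "u = label_tree T' h" "relax u = (T', pointers T' h)" "h (lml T') = 1"
      "\<And>v. v \<in> leaves T' - {lml T'} \<Longrightarrow> h v \<in> {1..length (targets_before T' v)}"
    using \<open>u \<in> decorated_trees n\<close> by (elim decorated_treesE) blast
  from eq t(2) u(2) have "T' = T" and ptr: "pointers T g = pointers T h"
    by auto
  note u = u[unfolded \<open>T' = T\<close>]
  have "g v = h v" if "v \<in> leaves T" for v
  proof (cases "v = lml T")
    case False
    with that have "nth_target T v (g v) = nth_target T v (h v)"
      using fun_cong[OF ptr, of v] by (simp add: pointers_def)
    with that False t(4) u(4) show ?thesis
      using bij_betw_imp_inj_on[OF bij_betw_nth_target] by (blast dest: inj_onD)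
  qed (simp add: t(3) u(3))
  then show "t = u"
    unfolding t(1) u(1) by (rule label_tree_cong)
qed

lemma relax_image: "relax ` decorated_trees n = relaxed_trees n"
proof (intro equalityI subsetI)
  fix p assume "p \<in> relax ` decorated_trees n"
  then obtain t where "t \<in> decorated_trees n" and p: "p = relax t"
    by blast
  then obtain T g where "relax t = (T, pointers T g)" "isize T = n"
    and "\<And>v. v \<in> leaves T - {lml T} \<Longrightarrow> g v \<in> {1..length (targets_before T v)}"
    by (elim decorated_treesE) blast
  then show "p \<in> relaxed_trees n"
    using bij_betw_apply[OF bij_betw_nth_target]
    by (auto simp: relaxed_trees_def p pointers_def simp del: atLeastAtMost_iff)
next
  fix p assume "p \<in> relaxed_trees n"
  then obtain T f where p: "p = (T, f)" and n: "isize T = n"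
    and f_leaf: "\<And>v. v \<in> leaves T - {lml T} \<Longrightarrow> f v \<in> {u. (u \<in> internals T \<or> u = lml T) \<and> precedes T u v}"
    and f_other: "\<And>v. v \<notin> leaves T - {lml T} \<Longrightarrow> f v = []"
    by (auto simp: relaxed_trees_def)
  define g where "g v = (if v = lml T then 1
    else inv_into {1..length (targets_before T v)} (nth_target T v) (f v))" for v
  have g_range: "g v \<in> {1..length (targets_before T v)}"
    and g_pointer: "nth_target T v (g v) = f v" if "v \<in> leaves T - {lml T}" for v
    using that bij_betw_nth_target[of v T] f_leaf[OF that]
    by (auto simp: g_def bij_betw_inv_into_right dest: bij_betw_inv_into bij_betw_apply simp del: atLeastAtMost_iff)
  have "label_tree T g \<in> decorated_trees n"
    using n g_range by (simp add: decorated_trees_def decorations_ok_label_tree_iff g_def del: atLeastAtMost_iff)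
  moreover have "relax (label_tree T g) = p"
    using g_pointer f_other
    by (auto simp: relax_def p pointers_def leaf_label_label_tree)
  ultimately show "p \<in> relax ` decorated_trees n"
    by blast
qed

lemma bij_relax: "bij_betw relax (decorated_trees n) (relaxed_trees n)"
  by (simp add: bij_betw_def inj_on_relax relax_image)

theorem theorem2p5:
  fixes n :: nat
  shows "\<exists>\<phi>. bij_betw \<phi> (relaxed_trees n) (dyck_paths n)"
  using bij_betw_trans[OF bij_betw_inv_into[OF bij_relax] bij_decorated_trees_dyck_paths]
  by blast

end
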